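(* Let $p$ be a prime and let $a,b,c$ be positive integers with $b>1$, $c\mid p^a-1$, $c$ a primitive divisor of $p^a-1$, and $p-1\mid c$. Put $m=ab$, $n=bc$, $u=\frac{p^a-1}{c}$, assume $n$ is a primitive divisor of $p^m-1$, and put $k=\frac{p^m-1}{n}$. Then for each $\beta\in\mathbb{F}_{p^m}$ there exist $\alpha_1,\dots,\alpha_b\in\mathbb{F}_{p^a}$ such that $$\#C_{k,\beta}(\mathbb{F}_{p^m})=\tfrac1b\Psi_b(p^a)\sum_{i=1}^b\#C_{u,\alpha_i}(\mathbb{F}_{p^a})-(p+1)p^a\Psi_{b-1}(p^a).\qquad(\ast)$$ Conversely, for any $\alpha_1,\dots,\alpha_b\in\mathbb{F}_{p^a}$ there exists $\beta\in\mathbb{F}_{p^m}$ satisfying $(\ast)$.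
   Context: $\Psi_b(x)=x^{b-1}+\cdots+x+1$. For a prime power $Q=p^M$, an integer $k$ and $\beta\in\mathbb{F}_Q$, $C_{k,\beta}$ is the Artin–Schreier curve $y^p-y=\beta x^k$, and $\#C_{k,\beta}(\mathbb{F}_Q):=1+\#\{(x,y)\in\mathbb{F}_Q^2: y^p-y=\beta x^k\}$. A positive integer $d$ is a primitive divisor of $p^M-1$ if $d\mid p^M-1$ and $d\nmid p^t-1$ for all $1\le t<M$. *)

theory Defs
  imports Complex_Main "HOL-Computational_Algebra.Primes"
begin

definition Psi :: "nat \<Rightarrow> real \<Rightarrow> real" where
  "Psi b x = (\<Sum>i<b. x ^ i)"

text \<open>Number of F-rational points (including the point at infinity) of the
Artin--Schreier curve y^p - y = beta x^k over the finite field given by the type.\<close>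
definition AS_points :: "nat \<Rightarrow> nat \<Rightarrow> 'a::{field,finite} \<Rightarrow> nat" where
  "AS_points p k beta = 1 + card {(x :: 'a, y). y ^ p - y = beta * x ^ k}"

definition primitive_divisor :: "nat \<Rightarrow> nat \<Rightarrow> nat \<Rightarrow> bool" where
  "primitive_divisor p M d \<longleftrightarrow> 0 < d \<and> d dvd p ^ M - 1 \<and>
     (\<forall>t. 1 \<le> t \<and> t < M \<longrightarrow> \<not> d dvd p ^ t - 1)"

end

theory Submission
  imports Defs "HOL-Computational_Algebra.Polynomial" "HOL-Algebra.Multiplicative_Group"
begin

text \<open>Let \<open>F\<close> have \<open>p\<^sup>m\<close> elements. The map \<open>y \<mapsto> y\<^sup>p - y\<close> is \<open>p\<close>-to-one onto the elements of
  absolute trace zero, and \<open>x \<mapsto> x\<^sup>k\<close> maps \<open>F\<^sup>*\<close> \<open>k\<close>-to-one onto the \<open>n\<close>-th roots of unity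
  when \<open>n k = p\<^sup>m - 1\<close>; hence \<open>#C\<^sub>k\<^sub>,\<^sub>\<beta> = 1 + p (1 + k N(\<beta>))\<close>, where \<open>N(\<beta>)\<close> counts
  the \<open>n\<close>-th roots of unity \<open>h\<close> with \<open>Tr(\<beta> h) = 0\<close>. The same holds over \<open>K = \<bbbF>\<^sub>q\<close>, \<open>q = p\<^sup>a\<close>,
  with \<open>u\<close> and \<open>c\<close>.

  Let \<open>z\<close> have order \<open>n = b c\<close> in \<open>F = \<bbbF>\<^bsub>q\<^sup>b\<^esub>\<close>. Every \<open>n\<close>-th root of unity is \<open>z\<^sup>j w\<close>
  with \<open>j < b\<close> and \<open>w\<^sup>c = 1\<close>, so \<open>w \<in> K\<close>; by transitivity of the trace,
  \<open>N(\<beta>) = \<Sum>\<^sub>j\<^sub><\<^sub>b N\<^sub>K(T(\<beta> z\<^sup>j))\<close> with \<open>T\<close> the trace from \<open>F\<close> to \<open>K\<close>. As \<open>n\<close> is a primitive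
  divisor of \<open>q\<^sup>b - 1\<close>, the conjugates \<open>z\<^bsup>q\<^sup>i\<^esup>\<close> (\<open>i < b\<close>) are distinct, which makes
  \<open>\<beta> \<mapsto> (T(\<beta> z\<^sup>j))\<^sub>j\<^sub><\<^sub>b\<close> a bijection \<open>F \<rightarrow> K\<^sup>b\<close>. Both directions follow, the rest being the
  identity \<open>u \<Psi>\<^sub>b(q) = b k\<close>. Since \<open>K\<close> and \<open>F\<close> are unrelated types, \<open>K\<close> is first embedded
  into \<open>F\<close>, via a presentation of \<open>K\<close> as \<open>\<int>[X]\<close> modulo \<open>p\<close> and a monic polynomial.\<close>

lemma
  fixes c :: "'a::idom"
  assumes "0 < n"
  shows finite_power_eq: "finite {x. x ^ n = c}"
    and card_power_eq_le: "card {x. x ^ n = c} \<le> n"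
proof -
  let ?P = "Polynomial.monom 1 n + [:-c:]"
  have deg: "degree ?P = n"
    using assms by (subst degree_add_eq_left) (simp_all add: degree_monom_eq)
  then have "?P \<noteq> 0" using assms by auto
  moreover have roots: "{x. x ^ n = c} = {x. poly ?P x = 0}" by (simp add: poly_monom)
  ultimately show "finite {x. x ^ n = c}" "card {x. x ^ n = c} \<le> n"
    using poly_roots_finite card_poly_roots_bound deg by metis+
qed

lemma card_power_eq_self_le:
  assumes "1 < n"
  shows "card {x :: 'a::idom. x ^ n = x} \<le> n"
proof -
  let ?P = "Polynomial.monom (1::'a) n + [:0, -1:]"
  have deg: "degree ?P = n"
    using assms by (subst degree_add_eq_left) (simp_all add: degree_monom_eq)
  then have "?P \<noteq> 0" using assms by auto
  moreover have "{x. x ^ n = x} = {x. poly ?P x = 0}" by (simp add: poly_monom)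
  ultimately show ?thesis using card_poly_roots_bound deg by metis
qed

lemma poly_eq_sum_lessThan:
  fixes P :: "'a::comm_semiring_1 poly"
  assumes "degree P < n"
  shows "poly P x = (\<Sum>j<n. poly.coeff P j * x ^ j)"
proof -
  have "poly P x = (\<Sum>j\<le>degree P. poly.coeff P j * x ^ j)" by (rule poly_altdef)
  also have "\<dots> = (\<Sum>j<n. poly.coeff P j * x ^ j)"
    using assms by (intro sum.mono_neutral_left) (auto simp: coeff_eq_0)
  finally show ?thesis .
qed

lemma power_sums_eq_0_imp_weight_eq_0:
  fixes x w :: "nat \<Rightarrow> 'a::field"
  assumes distinct: "\<And>i. 0 < i \<Longrightarrow> i < b \<Longrightarrow> x i \<noteq> x 0"
    and sums: "\<And>j. j < b \<Longrightarrow> (\<Sum>i<b. w i * x i ^ j) = 0" and "0 < b"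
  shows "w 0 = 0"
proof -
  \<comment> \<open>\<open>L\<close> vanishes at every \<open>x i\<close> except \<open>x 0\<close>; pair the sums with its coefficients.\<close>
  define L where "L = (\<Prod>i\<in>{0<..<b}. [:- x i, 1:])"
  have "degree L \<le> b - 1"
    using degree_prod_sum_le[of "{0<..<b}" "\<lambda>i. [:- x i, 1:]"] by (simp add: L_def)
  then have deg: "degree L < b" using \<open>0 < b\<close> by simp
  have "0 = (\<Sum>j<b. poly.coeff L j * (\<Sum>i<b. w i * x i ^ j))"
    using sums by simp
  also have "\<dots> = (\<Sum>i<b. w i * poly L (x i))"
    by (simp add: poly_eq_sum_lessThan[OF deg] sum_distrib_left sum_distrib_right mult_ac)
      (rule sum.swap)
  also have "\<dots> = (\<Sum>i\<in>{0}. w i * poly L (x i))"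
    using \<open>0 < b\<close> by (intro sum.mono_neutral_right) (auto simp: L_def poly_prod)
  finally have "w 0 * poly L (x 0) = 0" by simp
  moreover have "poly L (x 0) \<noteq> 0"
    using distinct by (auto simp: L_def poly_prod) (metis distinct)
  ultimately show ?thesis by simp
qed

lemma sum_lessThan_mult:
  fixes g :: "nat \<Rightarrow> 'a::comm_monoid_add"
  shows "(\<Sum>i<b * c. g i) = (\<Sum>j<b. \<Sum>l<c. g (j + b * l))"
proof -
  have "(\<Sum>i<c * b. g i) = (\<Sum>l<c. \<Sum>j<b. g (j + b * l))"
  proof (subst sum.nat_group[symmetric], rule sum.cong[OF refl])
    fix l
    show "sum g {l * b..<l * b + b} = (\<Sum>j<b. g (j + b * l))"
      using sum.shift_bounds_nat_ivl[of g 0 "l * b" b]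
      by (simp add: atLeast0LessThan add.commute mult.commute)
  qed
  then show ?thesis by (simp add: mult.commute sum.swap[of _ "{..<c}"])
qed

lemma card_less_mult_filter:
  fixes b c :: nat
  assumes "0 < b"
  shows "card {i. i < b * c \<and> Q (i mod b) (i div b)} = (\<Sum>j<b. card {l. l < c \<and> Q j l})"
proof -
  have "card {i. i < b * c \<and> Q (i mod b) (i div b)} = (\<Sum>i<b * c. if Q (i mod b) (i div b) then 1 else 0)"
    by (simp add: sum.If_cases Int_def)
  also have "\<dots> = (\<Sum>j<b. \<Sum>l<c. if Q j l then 1 else 0)"
    unfolding sum_lessThan_mult by (intro sum.cong refl) (use assms in simp)
  also have "\<dots> = (\<Sum>j<b. card {l. l < c \<and> Q j l})"
    by (simp add: sum.If_cases Int_def)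
  finally show ?thesis .
qed

lemma Psi_Suc: "Psi (Suc b) x = 1 + x * Psi b x"
  unfolding Psi_def sum.lessThan_Suc_shift by (simp add: sum_distrib_left)

lemma Psi_mult_diff_1: "(x - 1) * Psi b x = x ^ b - 1"
  by (simp add: Psi_def power_diff_1_eq)

section \<open>Roots of unity in finite fields\<close>

definition field_ring :: "'a::field ring" where
  "field_ring = \<lparr>carrier = UNIV, monoid.mult = (*), one = 1, zero = 0, add = (+)\<rparr>"

lemma field_field_ring: "field (field_ring :: 'a::field ring)"
proof -
  have "\<exists>y. x + y = 0" for x :: 'a
    using add.right_inverse by blast
  moreover have "x \<noteq> 0 \<Longrightarrow> \<exists>y. x * y = 1" for x :: 'a
    by (rule exI[of _ "inverse x"]) auto
  ultimately show ?thesis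
    unfolding field_ring_def by unfold_locales (auto simp: algebra_simps Units_def)
qed

lemma field_ring_pow: "x [^]\<^bsub>field_ring\<^esub> (n::nat) = (x::'a::field) ^ n"
  by (induction n) (simp_all add: field_ring_def)

lemma card_field_ge_2: "2 \<le> card (UNIV :: 'a::{field,finite} set)"
proof -
  have "card {0, 1 :: 'a} \<le> card (UNIV :: 'a set)"
    by (rule card_mono) auto
  then show ?thesis by simp
qed

lemma exists_primitive_element:
  obtains g :: "'a::{field,finite}" where "\<And>j. g ^ j = 1 \<longleftrightarrow> (card (UNIV :: 'a set) - 1) dvd j"
proof -
  let ?R = "field_ring :: 'a ring"
  interpret field ?R by (rule field_field_ring)
  interpret G: group "mult_of ?R" by (rule field_mult_group)
  have fin: "finite (carrier ?R)" by simp
  from finite_field_mult_group_has_gen[OF fin] obtain g where g: "g \<in> carrier (mult_of ?R)"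
    and gen: "carrier (mult_of ?R) = {g [^]\<^bsub>?R\<^esub> i | i::nat. i \<in> UNIV}" ..
  have "G.ord g = card (generate (mult_of ?R) {g})" by (rule G.generate_pow_card[OF g])
  also have "generate (mult_of ?R) {g} = carrier (mult_of ?R)"
    using G.generate_pow_on_finite_carrier[OF _ g] gen by (simp add: nat_pow_mult_of)
  also have "card \<dots> = card (UNIV :: 'a set) - 1"
    by (simp add: field_ring_def card_Diff_singleton)
  finally have "g [^]\<^bsub>mult_of ?R\<^esub> j = \<one>\<^bsub>mult_of ?R\<^esub> \<longleftrightarrow> (card (UNIV :: 'a set) - 1) dvd j" for j
    using G.pow_eq_id[OF g] by simp
  moreover have "g [^]\<^bsub>mult_of ?R\<^esub> j = g ^ j" for j
    unfolding nat_pow_mult_of by (rule field_ring_pow)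
  moreover have "\<one>\<^bsub>mult_of ?R\<^esub> = 1"
    by (simp add: field_ring_def)
  ultimately show ?thesis
    using that by metis
qed

lemma power_card_minus_one:
  fixes x :: "'a::{field,finite}"
  assumes "x \<noteq> 0"
  shows "x ^ (card (UNIV :: 'a set) - 1) = 1"
proof -
  let ?R = "field_ring :: 'a ring"
  interpret field ?R by (rule field_field_ring)
  interpret G: group "mult_of ?R" by (rule field_mult_group)
  have "x [^]\<^bsub>mult_of ?R\<^esub> order (mult_of ?R) = \<one>\<^bsub>mult_of ?R\<^esub>"
    using assms by (intro G.pow_order_eq_1) (simp add: field_ring_def)
  moreover have "order (mult_of ?R) = card (UNIV :: 'a set) - 1"
    by (simp add: order_def field_ring_def card_Diff_singleton)
  ultimately show ?thesis
    by (simp add: nat_pow_mult_of field_ring_pow) (simp add: field_ring_def)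
qed

lemma power_eq_power_iff_cong:
  fixes z :: "'a::idom"
  assumes order: "\<And>j. z ^ j = 1 \<longleftrightarrow> d dvd j" and "0 < d"
  shows "z ^ i = z ^ j \<longleftrightarrow> i mod d = j mod d"
proof -
  have "z \<noteq> 0" using order[of d] \<open>0 < d\<close> by (auto simp: power_0_left)
  have "z ^ i = z ^ j \<longleftrightarrow> i mod d = j mod d" if "i \<le> j" for i j
  proof -
    have "z ^ j = z ^ i * z ^ (j - i)" using that by (simp flip: power_add)
    then have "z ^ i = z ^ j \<longleftrightarrow> z ^ (j - i) = 1" using \<open>z \<noteq> 0\<close> by auto
    also have "\<dots> \<longleftrightarrow> i mod d = j mod d" using order mod_eq_dvd_iff_nat[OF that] by metis
    finally show ?thesis .
  qed
  then show ?thesis by (metis nat_le_linear)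
qed

lemma power_eq_self_imp_eq_1:
  fixes x :: "'a::idom"
  assumes "x \<noteq> 0" "0 < m" "x ^ m = x"
  shows "x ^ (m - 1) = 1"
proof -
  have "x * x ^ (m - 1) = x * 1" using assms by (simp flip: power_Suc)
  then show ?thesis using assms(1) by (rule mult_left_cancel[THEN iffD1, rotated])
qed

lemma power_exact_order:
  fixes g :: "'a::monoid_mult"
  assumes "\<And>j. g ^ j = 1 \<longleftrightarrow> d * k dvd j" and "0 < k"
  shows "(g ^ k) ^ j = 1 \<longleftrightarrow> d dvd j"
proof -
  have "(g ^ k) ^ j = 1 \<longleftrightarrow> d * k dvd k * j"
    using assms(1)[of "k * j"] by (simp only: power_mult)
  also have "\<dots> \<longleftrightarrow> d dvd j"
    using assms(2) by (simp add: mult.commute[of d k])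
  finally show ?thesis .
qed

lemma exists_element_of_order:
  assumes "d dvd card (UNIV :: 'a::{field,finite} set) - 1"
  obtains z :: "'a::{field,finite}" where "\<And>j. z ^ j = 1 \<longleftrightarrow> d dvd j"
proof -
  obtain k where k: "card (UNIV :: 'a set) - 1 = d * k" using assms by blast
  obtain g :: 'a where g: "\<And>j. g ^ j = 1 \<longleftrightarrow> (card (UNIV :: 'a set) - 1) dvd j"
    using exists_primitive_element by blast
  have "k > 0" using k card_field_ge_2[where 'a = 'a] by (cases k) auto
  have "(g ^ k) ^ j = 1 \<longleftrightarrow> d dvd j" for j
    using g k \<open>k > 0\<close> by (intro power_exact_order) auto
  then show ?thesis by (rule that)
qed

lemma roots_of_unity_eq_powers:
  fixes z :: "'a::idom"
  assumes order: "\<And>j. z ^ j = 1 \<longleftrightarrow> d dvd j" and "0 < d"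
  shows "{h. h ^ d = 1} = (\<lambda>i. z ^ i) ` {..<d}" and "inj_on (\<lambda>i. z ^ i) {..<d}"
proof -
  show inj: "inj_on (\<lambda>i. z ^ i) {..<d}"
    by (rule inj_onI) (simp add: power_eq_power_iff_cong[OF order \<open>0 < d\<close>])
  have "(\<lambda>i. z ^ i) ` {..<d} \<subseteq> {h. h ^ d = 1}"
    using order by (auto simp flip: power_mult simp: mult.commute)
  moreover have "card ((\<lambda>i. z ^ i) ` {..<d}) = d" using card_image[OF inj] by simp
  ultimately show "{h. h ^ d = 1} = (\<lambda>i. z ^ i) ` {..<d}"
    using card_seteq[OF finite_power_eq] card_power_eq_le \<open>0 < d\<close> by metis
qed

lemma card_roots_of_unity_filter:
  fixes z :: "'a::idom"
  assumes order: "\<And>j. z ^ j = 1 \<longleftrightarrow> d dvd j" and "0 < d"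
  shows "card {h. h ^ d = 1 \<and> P h} = card {i. i < d \<and> P (z ^ i)}"
proof -
  have "{h. h ^ d = 1 \<and> P h} = (\<lambda>i. z ^ i) ` {i. i < d \<and> P (z ^ i)}"
    using roots_of_unity_eq_powers(1)[OF assms] by auto
  moreover have "inj_on (\<lambda>i. z ^ i) {i. i < d \<and> P (z ^ i)}"
    using roots_of_unity_eq_powers(2)[OF assms] by (rule inj_on_subset) auto
  ultimately show ?thesis by (simp add: card_image)
qed

lemma card_nonzero_filter_power:
  fixes P :: "'a::{field,finite} \<Rightarrow> bool"
  assumes dk: "d * k = card (UNIV :: 'a set) - 1"
  shows "card {x. x \<noteq> 0 \<and> P (x ^ k)} = k * card {h. h ^ d = 1 \<and> P h}"
proof -
  let ?N = "card (UNIV :: 'a set) - 1"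
  have "0 < ?N" using card_field_ge_2[where 'a = 'a] by simp
  then have "0 < d * k" using dk by simp
  then have "0 < d" "0 < k" by auto
  obtain g :: 'a where g: "\<And>j. g ^ j = 1 \<longleftrightarrow> ?N dvd j"
    using exists_primitive_element by blast
  have z: "(g ^ k) ^ j = 1 \<longleftrightarrow> d dvd j" for j
    using g dk \<open>0 < k\<close> by (intro power_exact_order) auto
  have power_index: "(g ^ i) ^ k = (g ^ k) ^ (i mod d)" for i
  proof -
    have "(g ^ i) ^ k = (g ^ k) ^ i" by (metis power_mult mult.commute)
    also have "\<dots> = (g ^ k) ^ (i mod d)"
      by (simp add: power_eq_power_iff_cong[OF z \<open>0 < d\<close>])
    finally show ?thesis .
  qed
  have "{x. x \<noteq> 0 \<and> P (x ^ k)} = {x. x ^ ?N = 1 \<and> P (x ^ k)}"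
    using power_card_minus_one \<open>0 < ?N\<close> by (auto simp: power_0_left)
  also have "card \<dots> = card {i. i < ?N \<and> P ((g ^ i) ^ k)}"
    by (rule card_roots_of_unity_filter[OF g \<open>0 < ?N\<close>])
  also have "\<dots> = card {i. i < d * k \<and> P ((g ^ k) ^ (i mod d))}"
    by (simp add: power_index dk)
  also have "\<dots> = (\<Sum>j<d. card {l. l < k \<and> P ((g ^ k) ^ j)})"
    using card_less_mult_filter[OF \<open>0 < d\<close>, of k "\<lambda>j l. P ((g ^ k) ^ j)"] by simp
  also have "\<dots> = (\<Sum>j<d. if P ((g ^ k) ^ j) then k else 0)"
    by (intro sum.cong) auto
  also have "\<dots> = k * card {j. j < d \<and> P ((g ^ k) ^ j)}"
    by (simp add: sum.If_cases Int_def mult.commute)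
  also have "\<dots> = k * card {h. h ^ d = 1 \<and> P h}"
    unfolding card_roots_of_unity_filter[OF z \<open>0 < d\<close>] ..
  finally show ?thesis .
qed

section \<open>Frobenius, trace and Artin--Schreier curves\<close>

definition trace :: "nat \<Rightarrow> nat \<Rightarrow> 'a::comm_ring_1 \<Rightarrow> 'a" where
  "trace q e x = (\<Sum>i<e. x ^ q ^ i)"

definition zero_trace_roots :: "nat \<Rightarrow> nat \<Rightarrow> nat \<Rightarrow> 'a::comm_ring_1 \<Rightarrow> nat" where
  "zero_trace_roots p e d \<beta> = card {h. h ^ d = 1 \<and> trace p e (\<beta> * h) = 0}"

lemma of_nat_card_UNIV: "of_nat (card (UNIV :: 'a::{ring_1,finite} set)) = (0::'a)"
proof -
  have "(\<Sum>x\<in>UNIV. x + 1) = (\<Sum>x\<in>(UNIV :: 'a set). x)"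
    by (rule sum.reindex_bij_witness[of _ "\<lambda>x. x - 1" "\<lambda>x. x + 1"]) auto
  then show ?thesis by (simp add: sum.distrib)
qed

locale prime_power_field =
  fixes p e :: nat and field_type :: "'a::{field,finite} itself"
  assumes prime: "prime p" and card_UNIV: "card (UNIV :: 'a set) = p ^ e"
begin

lemma p_gt_1: "1 < p"
  using prime prime_gt_1_nat by blast

lemma e_pos: "0 < e"
  using card_field_ge_2[where 'a = 'a] card_UNIV by (cases e) auto

lemma CHAR_eq: "CHAR('a) = p"
proof -
  have "CHAR('a) dvd p ^ e"
    using of_nat_card_UNIV[where 'a = 'a] card_UNIV of_nat_eq_0_iff_char_dvd by metis
  moreover have "prime CHAR('a)"
    by (intro prime_CHAR_semidom finite_imp_CHAR_pos) simp
  ultimately show ?thesis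
    using prime prime_dvd_power primes_dvd_imp_eq by blast
qed

lemma frobenius_add: "(x + y :: 'a) ^ p ^ i = x ^ p ^ i + y ^ p ^ i"
  by (rule freshmans_dream') (simp_all add: CHAR_eq prime)

lemma frobenius_sum: "(\<Sum>j\<in>A. f j :: 'a) ^ p ^ i = (\<Sum>j\<in>A. f j ^ p ^ i)"
  by (rule freshmans_dream_sum') (simp_all add: CHAR_eq prime)

lemma frobenius_diff: "(x - y :: 'a) ^ p ^ i = x ^ p ^ i - y ^ p ^ i"
  using frobenius_add[of "x - y" y i] by (simp add: algebra_simps)

lemma power_card: "(x :: 'a) ^ p ^ e = x"
proof (cases "x = 0")
  case False
  have "x ^ p ^ e = x * x ^ (p ^ e - 1)"
    using p_gt_1 by (simp flip: power_Suc)
  then show ?thesis using power_card_minus_one[OF False] card_UNIV by simp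
qed (use p_gt_1 in simp)

lemma power_card_power: "(x :: 'a) ^ (p ^ e) ^ j = x"
  by (induction j) (simp_all add: power_card power_mult)

lemma trace_diff: "trace (p ^ s) r (x - y :: 'a) = trace (p ^ s) r x - trace (p ^ s) r y"
  by (simp add: trace_def frobenius_diff sum_subtractf flip: power_mult)

lemma trace_artin_schreier: "trace p e ((y :: 'a) ^ p - y) = 0"
proof -
  have "trace p e (y ^ p - y) = (\<Sum>i<e. y ^ p ^ Suc i - y ^ p ^ i)"
    by (simp add: trace_def frobenius_diff flip: power_mult)
  also have "\<dots> = y ^ p ^ e - y"
    by (subst sum_lessThan_telescope) simp
  finally show ?thesis by (simp add: power_card)
qed

lemma card_trace_kernel_le: "card {t :: 'a. trace p e t = 0} \<le> p ^ (e - 1)"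
proof -
  let ?P = "\<Sum>i<e. Polynomial.monom (1::'a) (p ^ i)"
  have "{t. trace p e t = 0} = {t. poly ?P t = 0}"
    by (simp add: trace_def poly_sum poly_monom)
  moreover have "degree ?P \<le> p ^ (e - 1)"
  proof (rule degree_sum_le)
    fix i assume "i \<in> {..<e}"
    then have "p ^ i \<le> p ^ (e - 1)" using p_gt_1 by (intro power_increasing) auto
    then show "degree (Polynomial.monom (1::'a) (p ^ i)) \<le> p ^ (e - 1)"
      by (simp add: degree_monom_eq)
  qed simp
  moreover have "poly.coeff ?P (p ^ (e - 1)) = 1"
    using p_gt_1 e_pos by (simp add: coeff_sum coeff_monom power_inject_exp)
  then have "?P \<noteq> 0" by auto
  ultimately show ?thesis
    using card_poly_roots_bound[of ?P] by simp
qed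

lemma card_artin_schreier_fibre_eq:
  "card {y :: 'a. y ^ p - y = y0 ^ p - y0} = card {y :: 'a. y ^ p = y}"
proof -
  have "{y :: 'a. y ^ p - y = y0 ^ p - y0} = (\<lambda>z. z + y0) ` {z. z ^ p = z}"
  proof (intro equalityI subsetI)
    fix y :: 'a assume "y \<in> {y. y ^ p - y = y0 ^ p - y0}"
    then have "y ^ p - y0 ^ p = y - y0" by (simp add: algebra_simps)
    then have "(y - y0) ^ p = y - y0"
      using frobenius_diff[of y y0 1] by simp
    then show "y \<in> (\<lambda>z. z + y0) ` {z. z ^ p = z}" by (intro image_eqI[of _ _ "y - y0"]) simp_all
  qed (use frobenius_add[of _ y0 1] in auto)
  then show ?thesis by (simp add: card_image)
qed

lemma artin_schreier_image:
  shows "range (\<lambda>y :: 'a. y ^ p - y) = {t. trace p e t = 0}"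
    and card_frobenius_fixed: "card {y :: 'a. y ^ p = y} = p"
proof -
  let ?f = "\<lambda>y :: 'a. y ^ p - y" and ?K = "{y :: 'a. y ^ p = y}"
  have "p ^ e = (\<Sum>t\<in>range ?f. card {y. ?f y = t})"
    using card_UNIV sum.group[of UNIV "range ?f" ?f "\<lambda>_. 1::nat"] by simp
  also have "\<dots> = (\<Sum>t\<in>range ?f. card ?K)"
    by (rule sum.cong[OF refl]) (auto simp: card_artin_schreier_fibre_eq)
  also have "\<dots> = card (range ?f) * card ?K" by simp
  finally have product: "card (range ?f) * card ?K = p ^ (e - 1) * p"
    using e_pos by (simp flip: power_Suc2)
  have range_sub: "range ?f \<subseteq> {t. trace p e t = 0}"
    using trace_artin_schreier by auto
  then have range_le: "card (range ?f) \<le> p ^ (e - 1)"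
    using card_trace_kernel_le card_mono[OF _ range_sub] by (meson finite order_trans)
  have "card ?K \<le> p" by (rule card_power_eq_self_le[OF p_gt_1])
  \<comment> \<open>\<open>p\<^sup>e\<close> is the product of two cardinalities bounded by \<open>p\<^bsup>e-1\<^esup>\<close> and \<open>p\<close>.\<close>
  show card_K: "card ?K = p"
  proof (rule ccontr)
    assume "card ?K \<noteq> p"
    with \<open>card ?K \<le> p\<close> have "p ^ (e - 1) * card ?K < p ^ (e - 1) * p"
      using p_gt_1 by simp
    moreover have "card (range ?f) * card ?K \<le> p ^ (e - 1) * card ?K"
      using range_le by (rule mult_le_mono1)
    ultimately show False using product by simp
  qed
  then have "card (range ?f) = p ^ (e - 1)"
    using product p_gt_1 by simp
  then show "range ?f = {t. trace p e t = 0}"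
    using range_sub card_trace_kernel_le by (intro card_seteq) auto
qed

lemma card_artin_schreier_fibre:
  "card {y :: 'a. y ^ p - y = t} = (if trace p e t = 0 then p else 0)"
proof (cases "trace p e t = 0")
  case True
  then obtain y0 where "t = y0 ^ p - y0" using artin_schreier_image(1) by blast
  then show ?thesis using True card_artin_schreier_fibre_eq card_frobenius_fixed by simp
next
  case False
  then show ?thesis using artin_schreier_image(1) by auto
qed

lemma AS_points_eq:
  assumes dk: "d * k = p ^ e - 1"
  shows "AS_points p k (\<beta> :: 'a) = 1 + p * (1 + k * zero_trace_roots p e d \<beta>)"
proof -
  have "0 < k" using dk one_less_power[OF p_gt_1 e_pos] by (cases k) auto
  have "{(x :: 'a, y). y ^ p - y = \<beta> * x ^ k} = Sigma UNIV (\<lambda>x. {y. y ^ p - y = \<beta> * x ^ k})"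
    by auto
  then have "card {(x :: 'a, y). y ^ p - y = \<beta> * x ^ k} = (\<Sum>x\<in>UNIV. card {y. y ^ p - y = \<beta> * x ^ k})"
    by simp
  also have "\<dots> = p * card {x. trace p e (\<beta> * x ^ k) = 0}"
    by (simp add: card_artin_schreier_fibre sum.If_cases)
  also have "{x. trace p e (\<beta> * x ^ k) = 0} = insert 0 {x. x \<noteq> 0 \<and> trace p e (\<beta> * x ^ k) = 0}"
    using \<open>0 < k\<close> p_gt_1 by (auto simp: trace_def power_0_left)
  also have "card \<dots> = 1 + k * card {h. h ^ d = 1 \<and> trace p e (\<beta> * h) = 0}"
    using card_nonzero_filter_power[of d k "\<lambda>h. trace p e (\<beta> * h) = 0"] dk card_UNIV by simp
  finally show ?thesis unfolding AS_points_def zero_trace_roots_def by simp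
qed

lemma trace_trace: "trace p (a * b) (x :: 'a) = trace p a (trace (p ^ a) b x)"
proof -
  have "trace p a (trace (p ^ a) b x) = (\<Sum>i<a. \<Sum>j<b. x ^ p ^ (i + a * j))"
    by (simp add: trace_def frobenius_sum power_add mult_ac flip: power_mult)
  also have "\<dots> = trace p (a * b) x"
    by (simp add: trace_def sum_lessThan_mult)
  finally show ?thesis ..
qed

end

section \<open>Embedding the field of order \<open>p\<^sup>a\<close> into the field of order \<open>p\<^sup>m\<close>\<close>

definition eval_int_poly :: "int poly \<Rightarrow> 'a::comm_ring_1 \<Rightarrow> 'a" where
  "eval_int_poly f x = poly (map_poly of_int f) x"

lemma map_poly_of_int_add:
  "map_poly (of_int :: int \<Rightarrow> 'a::comm_ring_1) (f + g) = map_poly of_int f + map_poly of_int g"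
  by (rule poly_eqI) (simp add: coeff_map_poly)

lemma map_poly_of_int_diff:
  "map_poly (of_int :: int \<Rightarrow> 'a::comm_ring_1) (f - g) = map_poly of_int f - map_poly of_int g"
  by (rule poly_eqI) (simp add: coeff_map_poly)

lemma map_poly_of_int_mult:
  "map_poly (of_int :: int \<Rightarrow> 'a::comm_ring_1) (f * g) = map_poly of_int f * map_poly of_int g"
  by (rule poly_eqI) (simp add: coeff_map_poly coeff_mult)

lemma eval_int_poly_add: "eval_int_poly (f + g) x = eval_int_poly f x + eval_int_poly g x"
  by (simp add: eval_int_poly_def map_poly_of_int_add)

lemma eval_int_poly_diff: "eval_int_poly (f - g) x = eval_int_poly f x - eval_int_poly g x"
  by (simp add: eval_int_poly_def map_poly_of_int_diff)

lemma eval_int_poly_mult: "eval_int_poly (f * g) x = eval_int_poly f x * eval_int_poly g x"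
  by (simp add: eval_int_poly_def map_poly_of_int_mult)

lemma eval_int_poly_monom: "eval_int_poly (Polynomial.monom c j) x = of_int c * x ^ j"
  by (simp add: eval_int_poly_def map_poly_monom poly_monom)

lemma eval_int_poly_pCons: "eval_int_poly (pCons c f) x = of_int c + x * eval_int_poly f x"
  by (simp add: eval_int_poly_def map_poly_pCons)

lemma eval_int_poly_0 [simp]: "eval_int_poly 0 x = 0"
  and eval_int_poly_1 [simp]: "eval_int_poly 1 x = 1"
  by (simp_all add: eval_int_poly_def)

lemma monic_int_poly_division:
  fixes \<mu> g :: "int poly"
  assumes "lead_coeff \<mu> = 1"
  obtains s r where "g = \<mu> * s + r" and "degree r < degree \<mu> \<or> r = 0"
proof -
  obtain s r where sr: "pseudo_divmod g \<mu> = (s, r)" by (cases "pseudo_divmod g \<mu>") auto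
  have "\<mu> \<noteq> 0" using assms by auto
  from pseudo_divmod[OF this sr] assms have "g = \<mu> * s + r" "r = 0 \<or> degree r < degree \<mu>"
    by auto
  then show ?thesis using that by blast
qed

context prime_power_field
begin

lemma frobenius_of_int: "(of_int z :: 'a) ^ p ^ i = of_int z"
proof -
  have "(of_nat n :: 'a) ^ p ^ i = of_nat n" for n
    using p_gt_1 by (induction n) (simp_all add: frobenius_add)
  moreover obtain m n where "z = int m - int n" by (rule int_diff_cases)
  ultimately show ?thesis by (simp add: frobenius_diff)
qed

lemma of_int_eq_0_iff_dvd: "(of_int z :: 'a) = 0 \<longleftrightarrow> int p dvd z"
  using of_int_eq_0_iff_char_dvd CHAR_eq by metis

lemma exists_element_distinct_conjugates:
  obtains \<gamma> :: 'a where "inj_on (\<lambda>t. \<gamma> ^ p ^ t) {..<e}"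
proof -
  obtain g :: 'a where g: "\<And>j. g ^ j = 1 \<longleftrightarrow> (p ^ e - 1) dvd j"
    using exists_primitive_element card_UNIV by metis
  have "g \<noteq> 0" using g[of "p ^ e - 1"] one_less_power[OF p_gt_1 e_pos] by (auto simp: power_0_left)
  have "g ^ p ^ s \<noteq> g ^ p ^ t" if "s < t" "t < e" for s t
  proof
    assume "g ^ p ^ s = g ^ p ^ t"
    then have "(g ^ p ^ s) ^ p ^ (e - t) = (g ^ p ^ t) ^ p ^ (e - t)" by simp
    also have "\<dots> = g" using that power_card by (simp flip: power_mult power_add)
    finally have "g ^ p ^ (s + (e - t)) = g" by (simp add: power_add power_mult)
    then have "g ^ (p ^ (s + (e - t)) - 1) = 1"
      using \<open>g \<noteq> 0\<close> p_gt_1 by (intro power_eq_self_imp_eq_1) simp_all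
    then have "(p ^ e - 1) dvd (p ^ (s + (e - t)) - 1)" using g by simp
    have "1 < p ^ (s + (e - t))" using that p_gt_1 by (intro one_less_power) auto
    moreover have "p ^ (s + (e - t)) < p ^ e" using that p_gt_1 by (intro power_strict_increasing) auto
    ultimately have "0 < p ^ (s + (e - t)) - 1" "p ^ (s + (e - t)) - 1 < p ^ e - 1" by simp_all
    with \<open>(p ^ e - 1) dvd (p ^ (s + (e - t)) - 1)\<close> show False by (simp add: nat_dvd_not_less)
  qed
  then show ?thesis using that by (metis linorder_inj_onI' lessThan_iff)
qed

lemma eval_int_poly_frobenius: "eval_int_poly f ((x :: 'a) ^ p ^ t) = eval_int_poly f x ^ p ^ t"
proof (induction f rule: pCons_induct)
  case (pCons c f)
  then show ?case
    by (simp add: eval_int_poly_pCons frobenius_add frobenius_of_int power_mult_distrib)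
qed (use p_gt_1 in simp)

lemma map_poly_of_int_eq_0_iff:
  "map_poly (of_int :: int \<Rightarrow> 'a) f = 0 \<longleftrightarrow> (\<forall>i. int p dvd poly.coeff f i)"
  by (simp add: poly_eq_iff coeff_map_poly of_int_eq_0_iff_dvd)

lemma int_poly_dvd_coeff_if_eval_eq_0:
  assumes conj: "inj_on (\<lambda>t. \<gamma> ^ p ^ t) {..<e}"
    and deg: "degree f < e" and root: "eval_int_poly f (\<gamma> :: 'a) = 0"
  shows "int p dvd poly.coeff f i"
proof -
  let ?P = "map_poly (of_int :: int \<Rightarrow> 'a) f"
  have "?P = 0"
  proof (rule ccontr)
    assume "?P \<noteq> 0"
    have "eval_int_poly f (\<gamma> ^ p ^ t) = 0" for t
      using root p_gt_1 by (simp add: eval_int_poly_frobenius)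
    then have "(\<lambda>t. \<gamma> ^ p ^ t) ` {..<e} \<subseteq> {x. poly ?P x = 0}"
      by (auto simp: eval_int_poly_def)
    then have "card ((\<lambda>t. \<gamma> ^ p ^ t) ` {..<e}) \<le> degree ?P"
      using card_poly_roots_bound[OF \<open>?P \<noteq> 0\<close>] card_mono[OF poly_roots_finite[OF \<open>?P \<noteq> 0\<close>]]
      by (meson order_trans)
    also have "\<dots> \<le> degree f" by (rule map_poly_degree_leq)
    finally show False using card_image[OF conj] deg by simp
  qed
  then show ?thesis by (simp add: map_poly_of_int_eq_0_iff)
qed

lemma eval_int_poly_surj:
  assumes conj: "inj_on (\<lambda>t. \<gamma> ^ p ^ t) {..<e}"
  obtains f where "degree f < e" and "eval_int_poly f (\<gamma> :: 'a) = x"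
proof -
  define poly_of :: "(nat \<Rightarrow> int) \<Rightarrow> int poly" where "poly_of c = (\<Sum>i<e. Polynomial.monom (c i) i)" for c
  have coeff_poly_of: "poly.coeff (poly_of c) i = (if i < e then c i else 0)" for c i
    by (simp add: poly_of_def coeff_sum coeff_monom)
  have degree_poly_of: "degree (poly_of c) < e" for c
    using e_pos by (intro degree_lessI) (auto simp: coeff_poly_of)
  let ?A = "PiE {..<e} (\<lambda>_. {0..<int p})"
  have "inj_on (\<lambda>c. eval_int_poly (poly_of c) \<gamma>) ?A"
  proof (rule inj_onI)
    fix c c' assume c: "c \<in> ?A" and c': "c' \<in> ?A"
      and "eval_int_poly (poly_of c) \<gamma> = eval_int_poly (poly_of c') \<gamma>"
    then have "eval_int_poly (poly_of c - poly_of c') \<gamma> = 0" by (simp add: eval_int_poly_diff)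
    with degree_poly_of have coeff_dvd: "int p dvd poly.coeff (poly_of c - poly_of c') i" for i
      by (intro int_poly_dvd_coeff_if_eval_eq_0[OF conj] degree_diff_less)
    have dvd: "int p dvd c i - c' i" if "i < e" for i
      using coeff_dvd[of i] that by (simp add: coeff_poly_of)
    show "c = c'"
    proof (rule PiE_ext[OF c c'])
      fix i assume i: "i \<in> {..<e}"
      with c c' have "0 \<le> c i" "c i < int p" "0 \<le> c' i" "c' i < int p"
        by (auto simp: PiE_def Pi_def)
      moreover have "c i mod int p = c' i mod int p"
        using dvd[of i] i by (simp add: mod_eq_dvd_iff)
      ultimately show "c i = c' i" by simp
    qed
  qed
  then have "card ((\<lambda>c. eval_int_poly (poly_of c) \<gamma>) ` ?A) = card (UNIV :: 'a set)"
    by (simp add: card_image card_PiE card_UNIV)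
  then have "(\<lambda>c. eval_int_poly (poly_of c) \<gamma>) ` ?A = UNIV"
    by (intro card_subset_eq) simp_all
  then obtain c where "x = eval_int_poly (poly_of c) \<gamma>" by blast
  then show ?thesis using that degree_poly_of by blast
qed

lemma exists_root_of_factor:
  assumes factor: "P * S = Polynomial.monom 1 (p ^ e) - [:0, 1:]" and "0 < degree P"
  shows "\<exists>y :: 'a. poly P y = 0"
proof (rule ccontr)
  assume no_root: "\<nexists>y. poly P y = 0"
  have "1 < p ^ e" using one_less_power[OF p_gt_1 e_pos] .
  moreover have "P * S = Polynomial.monom 1 (p ^ e) + [:0, -1:]"
    using factor by simp
  ultimately have deg: "degree (P * S) = p ^ e"
    using p_gt_1 by (simp add: degree_add_eq_left degree_monom_eq)
  then have "P * S \<noteq> 0" using \<open>1 < p ^ e\<close> by (metis degree_0 not_one_less_zero)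
  then have "P \<noteq> 0" "S \<noteq> 0" by auto
  then have "degree S < p ^ e"
    using deg \<open>0 < degree P\<close> degree_mult_eq[of P S] by simp
  have "poly S y = 0" for y
  proof -
    have "poly P y * poly S y = 0"
      using power_card[of y] by (simp flip: poly_mult add: factor poly_monom)
    then show ?thesis using no_root by simp
  qed
  then have "card (UNIV :: 'a set) \<le> degree S"
    using card_poly_roots_bound[OF \<open>S \<noteq> 0\<close>] by simp
  then show False using \<open>degree S < p ^ e\<close> card_UNIV by simp
qed

text \<open>The field is \<open>\<int>[X]\<close> modulo \<open>p\<close> and a monic \<open>\<mu>\<close> of degree \<open>e\<close>; \<open>\<gamma>\<close> is the class of \<open>X\<close>.\<close>

lemma exists_int_poly_presentation:
  obtains \<gamma> :: 'a and \<mu> :: "int poly" where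
    "lead_coeff \<mu> = 1" "degree \<mu> = e"
    "\<And>x. \<exists>f. eval_int_poly f \<gamma> = x"
    "\<And>g. eval_int_poly g \<gamma> = 0 \<Longrightarrow> \<exists>s r. g = \<mu> * s + r \<and> (\<forall>i. int p dvd poly.coeff r i)"
proof -
  obtain \<gamma> :: 'a where conj: "inj_on (\<lambda>t. \<gamma> ^ p ^ t) {..<e}"
    by (rule exists_element_distinct_conjugates)
  obtain \<rho> where \<rho>: "degree \<rho> < e" "eval_int_poly \<rho> \<gamma> = \<gamma> ^ e"
    using eval_int_poly_surj[OF conj] by metis
  define \<mu> where "\<mu> = Polynomial.monom 1 e - \<rho>"
  have "poly.coeff \<mu> e = 1" using \<rho>(1) by (simp add: \<mu>_def coeff_eq_0)
  moreover have "degree \<mu> \<le> e"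
    unfolding \<mu>_def using \<rho>(1) by (intro degree_diff_le) (simp_all add: degree_monom_le)
  ultimately have deg: "degree \<mu> = e" by (simp add: le_antisym le_degree)
  then have lead: "lead_coeff \<mu> = 1" using \<open>poly.coeff \<mu> e = 1\<close> by simp
  have root: "eval_int_poly \<mu> \<gamma> = 0" using \<rho>(2) by (simp add: \<mu>_def eval_int_poly_diff eval_int_poly_monom)
  have "\<exists>s r. g = \<mu> * s + r \<and> (\<forall>i. int p dvd poly.coeff r i)" if "eval_int_poly g \<gamma> = 0" for g
  proof -
    obtain s r where sr: "g = \<mu> * s + r" "degree r < degree \<mu> \<or> r = 0"
      by (rule monic_int_poly_division[OF lead])
    then have "eval_int_poly r \<gamma> = 0"
      using that root by (simp add: eval_int_poly_add eval_int_poly_mult)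
    then have "int p dvd poly.coeff r i" for i
      using sr(2) deg by (auto intro: int_poly_dvd_coeff_if_eval_eq_0[OF conj])
    then show ?thesis using sr(1) by blast
  qed
  moreover have "\<exists>f. eval_int_poly f \<gamma> = x" for x
    using eval_int_poly_surj[OF conj] by metis
  ultimately show ?thesis using that lead deg by blast
qed

end

lemma exists_hom_of_int_poly_transfer:
  fixes \<gamma> :: "'a::comm_ring_1" and y :: "'b::comm_ring_1"
  assumes surj: "\<And>x. \<exists>f. eval_int_poly f \<gamma> = x"
    and transfer: "\<And>g. eval_int_poly g \<gamma> = 0 \<Longrightarrow> eval_int_poly g y = 0"
  shows "\<exists>\<phi> :: 'a \<Rightarrow> 'b. (\<forall>x x'. \<phi> (x + x') = \<phi> x + \<phi> x') \<and> (\<forall>x x'. \<phi> (x * x') = \<phi> x * \<phi> x')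
    \<and> \<phi> 1 = 1"
proof -
  define \<phi> where "\<phi> x = eval_int_poly (SOME f. eval_int_poly f \<gamma> = x) y" for x
  have \<phi>_eval: "\<phi> (eval_int_poly f \<gamma>) = eval_int_poly f y" for f
  proof -
    let ?f = "SOME f'. eval_int_poly f' \<gamma> = eval_int_poly f \<gamma>"
    have "eval_int_poly ?f \<gamma> = eval_int_poly f \<gamma>" by (rule someI) (rule refl)
    then have "eval_int_poly (?f - f) y = 0"
      by (intro transfer) (simp add: eval_int_poly_diff)
    then show ?thesis by (simp add: \<phi>_def eval_int_poly_diff)
  qed
  have "\<phi> (x + x') = \<phi> x + \<phi> x'" "\<phi> (x * x') = \<phi> x * \<phi> x'" for x x'
    using surj[of x] surj[of x'] \<phi>_eval[of "_ + _"] \<phi>_eval[of "_ * _"]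
    by (auto simp: \<phi>_eval eval_int_poly_add eval_int_poly_mult)
  moreover have "\<phi> 1 = 1" using \<phi>_eval[of 1] by simp
  ultimately show ?thesis by blast
qed

lemma inj_field_hom:
  fixes \<phi> :: "'a::field \<Rightarrow> 'b::field"
  assumes add: "\<And>x y. \<phi> (x + y) = \<phi> x + \<phi> y" and mult: "\<And>x y. \<phi> (x * y) = \<phi> x * \<phi> y"
    and one: "\<phi> 1 = 1"
  shows "inj \<phi>"
proof (rule injI)
  fix x x' assume "\<phi> x = \<phi> x'"
  then have "\<phi> (x - x') = 0" using add[of "x - x'" x'] by simp
  show "x = x'"
  proof (rule ccontr)
    assume "x \<noteq> x'"
    then have "\<phi> (x - x') * \<phi> (inverse (x - x')) = 1" by (simp flip: mult add: one)
    then show False using \<open>\<phi> (x - x') = 0\<close> by simp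
  qed
qed

lemma exists_int_poly_transfer:
  assumes "prime p" and card_K: "card (UNIV :: 'k::{field,finite} set) = p ^ a"
    and card_F: "card (UNIV :: 'f::{field,finite} set) = p ^ m" and "a dvd m"
  obtains \<gamma> :: "'k::{field,finite}" and y :: "'f::{field,finite}"
  where "\<And>x. \<exists>f. eval_int_poly f \<gamma> = x"
    and "\<And>g. eval_int_poly g \<gamma> = 0 \<Longrightarrow> eval_int_poly g y = 0"
proof -
  interpret K: prime_power_field p a "TYPE('k)" by unfold_locales fact+
  interpret F: prime_power_field p m "TYPE('f)" by unfold_locales fact+
  obtain \<gamma> :: 'k and \<mu> where lead: "lead_coeff \<mu> = 1" and deg: "degree \<mu> = a"
    and surj: "\<And>x. \<exists>f. eval_int_poly f \<gamma> = x"
    and reduce: "\<And>g. eval_int_poly g \<gamma> = 0 \<Longrightarrow> \<exists>s r. g = \<mu> * s + r \<and> (\<forall>i. int p dvd poly.coeff r i)"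
    using K.exists_int_poly_presentation by blast
  let ?F = "map_poly (of_int :: int \<Rightarrow> 'f)"
  have factor: "\<exists>s. ?F g = ?F \<mu> * ?F s" if g_root: "eval_int_poly g \<gamma> = 0" for g
  proof -
    obtain s r where "g = \<mu> * s + r" "\<forall>i. int p dvd poly.coeff r i" using reduce[OF g_root] by blast
    moreover from this(2) have "?F r = 0" by (simp add: F.map_poly_of_int_eq_0_iff)
    ultimately show ?thesis by (auto simp: map_poly_of_int_add map_poly_of_int_mult)
  qed
  define X :: "int poly" where "X = Polynomial.monom 1 (p ^ m) - [:0, 1:]"
  have "eval_int_poly X \<gamma> = 0"
  proof -
    obtain j where "m = a * j" using \<open>a dvd m\<close> by blast
    then show ?thesis
      using K.power_card_power[of \<gamma> j] by (simp add: X_def eval_int_poly_diff eval_int_poly_monom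
          eval_int_poly_pCons power_mult)
  qed
  from factor[OF this] obtain s where "?F X = ?F \<mu> * ?F s" ..
  moreover have "?F X = Polynomial.monom 1 (p ^ m) - [:0, 1:]"
    by (simp add: X_def map_poly_of_int_diff map_poly_monom map_poly_pCons)
  ultimately have "?F \<mu> * ?F s = Polynomial.monom 1 (p ^ m) - [:0, 1:]" by simp
  moreover have "degree (?F \<mu>) = a"
    using lead deg by (subst map_poly_degree_eq) simp_all
  ultimately obtain y :: 'f where "poly (?F \<mu>) y = 0"
    using F.exists_root_of_factor K.e_pos by metis
  then have "eval_int_poly g y = 0" if "eval_int_poly g \<gamma> = 0" for g
    using factor[OF that] by (auto simp: eval_int_poly_def)
  with surj show ?thesis by (rule that)
qed

lemma exists_field_embedding:
  assumes "prime p" and card_K: "card (UNIV :: 'k::{field,finite} set) = p ^ a"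
    and card_F: "card (UNIV :: 'f::{field,finite} set) = p ^ m" and "a dvd m"
  obtains \<phi> :: "'k::{field,finite} \<Rightarrow> 'f::{field,finite}" where
    "\<And>x y. \<phi> (x + y) = \<phi> x + \<phi> y" "\<And>x y. \<phi> (x * y) = \<phi> x * \<phi> y"
    "inj \<phi>" "range \<phi> = {y. y ^ p ^ a = y}"
proof -
  interpret K: prime_power_field p a "TYPE('k)" by unfold_locales fact+
  obtain \<gamma> :: 'k and y :: 'f where "\<And>x. \<exists>f. eval_int_poly f \<gamma> = x"
    and "\<And>g. eval_int_poly g \<gamma> = 0 \<Longrightarrow> eval_int_poly g y = 0"
    using exists_int_poly_transfer[OF assms] by blast
  then obtain \<phi> :: "'k \<Rightarrow> 'f" where add: "\<And>x x'. \<phi> (x + x') = \<phi> x + \<phi> x'"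
    and mult: "\<And>x x'. \<phi> (x * x') = \<phi> x * \<phi> x'" and one: "\<phi> 1 = 1"
    using exists_hom_of_int_poly_transfer by blast
  have inj: "inj \<phi>" using add mult one by (rule inj_field_hom)
  have power: "\<phi> (x ^ n) = \<phi> x ^ n" for x n
    by (induction n) (simp_all add: one mult)
  then have "range \<phi> \<subseteq> {y. y ^ p ^ a = y}"
    by (auto simp flip: power simp: K.power_card)
  moreover have "card (range \<phi>) = p ^ a"
    using card_image[OF inj] K.card_UNIV by simp
  moreover have "card {y :: 'f. y ^ p ^ a = y} \<le> p ^ a"
    using K.p_gt_1 K.e_pos by (intro card_power_eq_self_le one_less_power)
  ultimately have "range \<phi> = {y. y ^ p ^ a = y}"
    by (intro card_seteq) auto
  with add mult inj show ?thesis by (rule that)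
qed

section \<open>Descent along the relative trace\<close>

locale trace_descent =
  K: prime_power_field p a "TYPE('k)" + F: prime_power_field p "a * b" "TYPE('f)"
  for p a b :: nat and field_K :: "'k::{field,finite} itself" and field_F :: "'f::{field,finite} itself" +
  fixes c :: nat and \<phi> :: "'k \<Rightarrow> 'f"
  assumes c_dvd: "c dvd p ^ a - 1"
    and primitive: "primitive_divisor p (a * b) (b * c)"
    and \<phi>_add: "\<phi> (x + y) = \<phi> x + \<phi> y" and \<phi>_mult: "\<phi> (x * y) = \<phi> x * \<phi> y"
    and \<phi>_inj: "inj \<phi>" and \<phi>_range: "range \<phi> = {y. y ^ p ^ a = y}"
begin

abbreviation q :: nat where "q \<equiv> p ^ a"

abbreviation T :: "'f \<Rightarrow> 'f" where "T \<equiv> trace q b"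

lemma b_pos: "0 < b" and c_pos: "0 < c"
  using primitive by (simp_all add: primitive_divisor_def)

lemma q_gt_1: "1 < q"
  using one_less_power[OF K.p_gt_1 K.e_pos] .

lemma \<phi>_0: "\<phi> 0 = 0"
  using \<phi>_add[of 0 0] by (metis add.right_neutral add_left_cancel)

lemma \<phi>_1: "\<phi> 1 = 1"
proof -
  have "\<phi> 1 \<noteq> 0" using \<phi>_inj \<phi>_0 by (metis injD one_neq_zero)
  then show ?thesis using \<phi>_mult[of 1 1] by simp
qed

lemma \<phi>_power: "\<phi> (x ^ n) = \<phi> x ^ n"
  by (induction n) (simp_all add: \<phi>_1 \<phi>_mult)

lemma \<phi>_trace: "\<phi> (trace p a x) = trace p a (\<phi> x)"
proof -
  have "\<phi> (sum f A) = (\<Sum>i\<in>A. \<phi> (f i))" for f :: "nat \<Rightarrow> 'k" and A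
    by (induction A rule: infinite_finite_induct) (simp_all add: \<phi>_0 \<phi>_add)
  then show ?thesis by (simp add: trace_def \<phi>_power)
qed

lemma card_fixed_field: "card {y :: 'f. y ^ q = y} = q"
  using card_image[OF \<phi>_inj] \<phi>_range K.card_UNIV by simp

lemma power_q_root_of_unity: "(w :: 'f) ^ c = 1 \<Longrightarrow> w ^ q = w"
proof -
  assume "w ^ c = 1"
  obtain u where "q - 1 = c * u" using c_dvd by blast
  then have "w ^ (q - 1) = 1" using \<open>w ^ c = 1\<close> by (simp add: power_mult)
  moreover have "q = Suc (q - 1)" using q_gt_1 by simp
  ultimately show "w ^ q = w" by (metis mult.right_neutral power_Suc)
qed

lemma power_q_power_fixed: "(y :: 'f) ^ q = y \<Longrightarrow> y ^ q ^ j = y"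
  by (induction j) (simp_all add: power_mult)

lemma T_diff: "T (x - y) = T x - T y"
  by (rule F.trace_diff)

lemma T_mult_fixed: "y ^ q = y \<Longrightarrow> T (y * x) = y * T x"
  by (simp add: trace_def power_mult_distrib power_q_power_fixed sum_distrib_left)

lemma T_power_q: "T x ^ q = T x"
proof -
  have "(x ^ q ^ j) ^ q = x ^ q ^ Suc j" for j
    by (simp add: power_mult[symmetric] mult.commute)
  then have "T x ^ q = (\<Sum>j<b. x ^ q ^ Suc j)"
    by (simp add: trace_def F.frobenius_sum)
  also have "\<dots> = (\<Sum>j<b. x ^ q ^ j)"
  proof -
    have "x + (\<Sum>j<b. x ^ q ^ Suc j) = (\<Sum>j<Suc b. x ^ q ^ j)"
      by (simp only: sum.lessThan_Suc_shift power_0 power_one_right)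
    also have "\<dots> = (\<Sum>j<b. x ^ q ^ j) + x ^ q ^ b"
      by (rule sum.lessThan_Suc)
    also have "x ^ q ^ b = x" using F.power_card by (simp add: power_mult)
    finally show ?thesis by (simp add: add.commute)
  qed
  finally show ?thesis by (simp add: trace_def)
qed

definition z :: 'f where "z = (SOME z. \<forall>j. z ^ j = 1 \<longleftrightarrow> b * c dvd j)"

lemma z_order: "z ^ j = 1 \<longleftrightarrow> b * c dvd j"
proof -
  have "b * c dvd card (UNIV :: 'f set) - 1"
    using primitive F.card_UNIV by (simp add: primitive_divisor_def)
  then have "\<exists>z :: 'f. \<forall>j. z ^ j = 1 \<longleftrightarrow> b * c dvd j"
    using exists_element_of_order by metis
  from someI_ex[OF this] show ?thesis unfolding z_def by blast
qed

text \<open>This is where the primitivity of \<open>b c\<close> enters.\<close>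

lemma z_conjugate_ne: "0 < i \<Longrightarrow> i < b \<Longrightarrow> z ^ q ^ i \<noteq> z"
proof
  assume i: "0 < i" "i < b" and "z ^ q ^ i = z"
  moreover have "z \<noteq> 0" using z_order[of "b * c"] b_pos c_pos by (auto simp: power_0_left)
  ultimately have "z ^ (q ^ i - 1) = 1"
    using K.p_gt_1 by (intro power_eq_self_imp_eq_1) simp_all
  then have "b * c dvd p ^ (a * i) - 1" by (simp add: z_order power_mult)
  moreover have "1 \<le> a * i" "a * i < a * b" using i K.e_pos by simp_all
  ultimately show False using primitive by (auto simp: primitive_divisor_def)
qed

lemma T_nondegenerate:
  assumes "\<And>j. j < b \<Longrightarrow> T (d * z ^ j) = 0"
  shows "d = 0"
proof -
  have "(\<Sum>i<b. d ^ q ^ i * (z ^ q ^ i) ^ j) = 0" if "j < b" for j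
    using assms[OF that] by (simp add: trace_def power_mult_distrib flip: power_mult)
      (simp add: power_mult mult.commute)
  then have "d ^ q ^ 0 = 0"
    using z_conjugate_ne b_pos by (intro power_sums_eq_0_imp_weight_eq_0[where x = "\<lambda>i. z ^ q ^ i"]) auto
  then show ?thesis by simp
qed

lemma T_surj:
  assumes "\<And>j. j < b \<Longrightarrow> v j ^ q = v j"
  obtains \<beta> where "\<And>j. j < b \<Longrightarrow> T (\<beta> * z ^ j) = v j"
proof -
  let ?L = "\<lambda>\<beta>. restrict (\<lambda>j. T (\<beta> * z ^ j)) {..<b}"
  let ?A = "PiE {..<b} (\<lambda>_. {y :: 'f. y ^ q = y})"
  have "inj ?L"
  proof (rule injI)
    fix \<beta> \<beta>' assume eq: "?L \<beta> = ?L \<beta>'"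
    have "T ((\<beta> - \<beta>') * z ^ j) = 0" if "j < b" for j
      using fun_cong[OF eq, of j] that by (simp add: T_diff left_diff_distrib)
    then show "\<beta> = \<beta>'" using T_nondegenerate[of "\<beta> - \<beta>'"] by simp
  qed
  moreover have "?L \<beta> \<in> ?A" for \<beta>
    unfolding restrict_PiE_iff using T_power_q by simp
  then have "range ?L \<subseteq> ?A" by blast
  moreover have "card ?A = card (UNIV :: 'f set)"
    using F.card_UNIV by (simp add: card_PiE card_fixed_field power_mult)
  ultimately have "range ?L = ?A"
    by (intro card_subset_eq) (simp_all add: card_image finite_PiE)
  then have "restrict v {..<b} \<in> range ?L" using assms by simp
  then obtain \<beta> where eq: "restrict v {..<b} = ?L \<beta>" by (rule rangeE)
  have "T (\<beta> * z ^ j) = v j" if "j < b" for j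
    using fun_cong[OF eq, of j] that by simp
  then show ?thesis by (rule that)
qed

lemma zero_trace_roots_decompose:
  "zero_trace_roots p (a * b) (b * c) \<beta> = (\<Sum>j<b. zero_trace_roots p a c (T (\<beta> * z ^ j)))"
proof -
  have zb_order: "(z ^ b) ^ l = 1 \<longleftrightarrow> c dvd l" for l
    using power_exact_order[of z c b] z_order b_pos by (simp add: mult.commute)
  have z_split: "z ^ i = z ^ (i mod b) * (z ^ b) ^ (i div b)" for i
    by (simp flip: power_add power_mult)
  have trace_split: "trace p (a * b) (\<beta> * (z ^ j * (z ^ b) ^ l)) = trace p a (T (\<beta> * z ^ j) * (z ^ b) ^ l)"
    for j l
  proof -
    have "((z ^ b) ^ l) ^ c = 1" using zb_order[of "l * c"] by (simp add: power_mult)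
    then have "T ((z ^ b) ^ l * (\<beta> * z ^ j)) = (z ^ b) ^ l * T (\<beta> * z ^ j)"
      by (intro T_mult_fixed power_q_root_of_unity)
    then show ?thesis by (simp add: F.trace_trace mult_ac)
  qed
  have "zero_trace_roots p (a * b) (b * c) \<beta> = card {i. i < b * c \<and> trace p (a * b) (\<beta> * z ^ i) = 0}"
    unfolding zero_trace_roots_def using z_order b_pos c_pos by (intro card_roots_of_unity_filter) auto
  also have "\<dots> = (\<Sum>j<b. card {l. l < c \<and> trace p a (T (\<beta> * z ^ j) * (z ^ b) ^ l) = 0})"
    using card_less_mult_filter[OF b_pos, of c "\<lambda>j l. trace p (a * b) (\<beta> * (z ^ j * (z ^ b) ^ l)) = 0"]
    by (simp add: z_split[symmetric] trace_split)
  also have "\<dots> = (\<Sum>j<b. zero_trace_roots p a c (T (\<beta> * z ^ j)))"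
    unfolding zero_trace_roots_def using card_roots_of_unity_filter[OF zb_order c_pos] by simp
  finally show ?thesis .
qed

lemma zero_trace_roots_\<phi>: "zero_trace_roots p a c (\<phi> \<alpha>) = zero_trace_roots p a c \<alpha>"
proof -
  have \<phi>_eq_iff: "\<phi> x = \<phi> y \<longleftrightarrow> x = y" for x y using \<phi>_inj by (simp add: inj_eq)
  have "{w. w ^ c = 1 \<and> trace p a (\<phi> \<alpha> * w) = 0} = \<phi> ` {h. h ^ c = 1 \<and> trace p a (\<alpha> * h) = 0}"
  proof (intro equalityI subsetI)
    fix w assume w: "w \<in> {w. w ^ c = 1 \<and> trace p a (\<phi> \<alpha> * w) = 0}"
    then have "w \<in> range \<phi>" using \<phi>_range power_q_root_of_unity by auto
    then obtain h where h: "w = \<phi> h" by blast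
    have "\<phi> (h ^ c) = \<phi> 1" using w h by (simp add: \<phi>_power \<phi>_1)
    moreover have "\<phi> (trace p a (\<alpha> * h)) = \<phi> 0" using w h by (simp add: \<phi>_trace \<phi>_mult \<phi>_0)
    ultimately show "w \<in> \<phi> ` {h. h ^ c = 1 \<and> trace p a (\<alpha> * h) = 0}"
      using h by (simp add: \<phi>_eq_iff)
  qed (auto simp flip: \<phi>_power \<phi>_mult \<phi>_trace simp: \<phi>_1 \<phi>_0)
  then show ?thesis
    unfolding zero_trace_roots_def using \<phi>_inj by (simp add: card_image inj_on_subset)
qed

lemma exists_counts_in_subfield:
  fixes \<beta> :: 'f
  shows "\<exists>\<alpha> :: nat \<Rightarrow> 'k. zero_trace_roots p (a * b) (b * c) \<beta> = (\<Sum>i = 1..b. zero_trace_roots p a c (\<alpha> i))"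
proof
  let ?\<alpha> = "\<lambda>i. inv_into UNIV \<phi> (T (\<beta> * z ^ (i - 1)))"
  have "\<phi> (?\<alpha> i) = T (\<beta> * z ^ (i - 1))" for i
    using \<phi>_range T_power_q by (intro f_inv_into_f) auto
  then have "(\<Sum>i = 1..b. zero_trace_roots p a c (?\<alpha> i)) = (\<Sum>i = 1..b. zero_trace_roots p a c (T (\<beta> * z ^ (i - 1))))"
    by (simp flip: zero_trace_roots_\<phi>)
  also have "\<dots> = zero_trace_roots p (a * b) (b * c) \<beta>"
    by (simp add: zero_trace_roots_decompose sum.atLeast1_atMost_eq)
  finally show "zero_trace_roots p (a * b) (b * c) \<beta> = (\<Sum>i = 1..b. zero_trace_roots p a c (?\<alpha> i))" ..
qed

lemma exists_count_in_extension:
  fixes \<alpha> :: "nat \<Rightarrow> 'k"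
  shows "\<exists>\<beta> :: 'f. zero_trace_roots p (a * b) (b * c) \<beta> = (\<Sum>i = 1..b. zero_trace_roots p a c (\<alpha> i))"
proof -
  obtain \<beta> where \<beta>: "\<And>j. j < b \<Longrightarrow> T (\<beta> * z ^ j) = \<phi> (\<alpha> (Suc j))"
    using T_surj[of "\<lambda>j. \<phi> (\<alpha> (Suc j))"] \<phi>_range by blast
  have "zero_trace_roots p (a * b) (b * c) \<beta> = (\<Sum>j<b. zero_trace_roots p a c (\<phi> (\<alpha> (Suc j))))"
    by (simp add: zero_trace_roots_decompose \<beta>)
  also have "\<dots> = (\<Sum>i = 1..b. zero_trace_roots p a c (\<alpha> i))"
    by (simp add: zero_trace_roots_\<phi> sum.atLeast1_atMost_eq)
  finally show ?thesis ..
qed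

lemma exponent_identity:
  "real ((q - 1) div c) * Psi b (real q) = real b * real ((p ^ (a * b) - 1) div (b * c))"
proof -
  define k where "k = (p ^ (a * b) - 1) div (b * c)"
  define u where "u = (q - 1) div c"
  have "b * c * k = p ^ (a * b) - 1"
    unfolding k_def using primitive by (simp add: primitive_divisor_def)
  then have bck: "real b * real c * real k = real q ^ b - 1"
    using F.p_gt_1 by (simp add: of_nat_diff power_mult flip: of_nat_mult)
  have "c * u = q - 1" unfolding u_def using c_dvd by simp
  then have cu: "real c * real u = real q - 1"
    using q_gt_1 by (simp add: of_nat_diff flip: of_nat_mult)
  have "real c * (real u * Psi b (real q)) = (real q - 1) * Psi b (real q)"
    by (simp only: mult.assoc[symmetric] cu)
  also have "\<dots> = real c * (real b * real k)"
    unfolding Psi_mult_diff_1 bck[symmetric] by simp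
  finally show ?thesis using c_pos by (simp add: k_def u_def)
qed

lemma AS_points_relation:
  fixes \<beta> :: 'f and \<alpha> :: "nat \<Rightarrow> 'k"
  assumes "zero_trace_roots p (a * b) (b * c) \<beta> = (\<Sum>i = 1..b. zero_trace_roots p a c (\<alpha> i))"
  shows "real (AS_points p ((p ^ (a * b) - 1) div (b * c)) \<beta>) =
    1 / real b * Psi b (real p ^ a) * (\<Sum>i = 1..b. real (AS_points p ((p ^ a - 1) div c) (\<alpha> i)))
    - (real p + 1) * real p ^ a * Psi (b - 1) (real p ^ a)"
proof -
  define k where "k = (p ^ (a * b) - 1) div (b * c)"
  define u where "u = (q - 1) div c"
  define S where "S = (\<Sum>i = 1..b. real (zero_trace_roots p a c (\<alpha> i)))"
  define \<Psi> where "\<Psi> = Psi b (real q)"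
  define \<Psi>' where "\<Psi>' = Psi (b - 1) (real q)"
  have k: "b * c * k = p ^ (a * b) - 1"
    unfolding k_def using primitive by (simp add: primitive_divisor_def)
  have u: "c * u = q - 1" unfolding u_def using c_dvd by simp
  have "(\<Sum>i = 1..b. real (AS_points p u (\<alpha> i))) = real b * (1 + real p) + real p * real u * S"
    by (simp add: K.AS_points_eq[OF u] S_def sum.distrib sum_distrib_left algebra_simps)
  then have "1 / real b * \<Psi> * (\<Sum>i = 1..b. real (AS_points p u (\<alpha> i)))
      = (1 + real p) * \<Psi> + real p * S * (real u * \<Psi>) / real b"
    using b_pos by (simp add: field_simps)
  also have "\<dots> = (1 + real p) * \<Psi> + real p * real k * S"
    using b_pos exponent_identity by (simp add: \<Psi>_def u_def k_def)
  also have "\<dots> = (real p + 1) * real q * \<Psi>' + (1 + real p * (1 + real k * S))"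
    using Psi_Suc[of "b - 1"] b_pos by (simp add: \<Psi>_def \<Psi>'_def algebra_simps)
  also have "1 + real p * (1 + real k * S) = real (AS_points p k \<beta>)"
    using assms by (simp add: F.AS_points_eq[OF k] S_def algebra_simps)
  finally show ?thesis
    by (simp add: k_def u_def \<Psi>_def \<Psi>'_def)
qed

lemma AS_points_descent:
  fixes \<beta> :: 'f
  shows "\<exists>\<alpha> :: nat \<Rightarrow> 'k. real (AS_points p ((p ^ (a * b) - 1) div (b * c)) \<beta>) =
    1 / real b * Psi b (real p ^ a) * (\<Sum>i = 1..b. real (AS_points p ((p ^ a - 1) div c) (\<alpha> i)))
    - (real p + 1) * real p ^ a * Psi (b - 1) (real p ^ a)"
proof -
  from exists_counts_in_subfield[of \<beta>] obtain \<alpha> :: "nat \<Rightarrow> 'k"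
    where "zero_trace_roots p (a * b) (b * c) \<beta> = (\<Sum>i = 1..b. zero_trace_roots p a c (\<alpha> i))" ..
  then show ?thesis by (blast dest: AS_points_relation)
qed

lemma AS_points_ascent:
  fixes \<alpha> :: "nat \<Rightarrow> 'k"
  shows "\<exists>\<beta> :: 'f. real (AS_points p ((p ^ (a * b) - 1) div (b * c)) \<beta>) =
    1 / real b * Psi b (real p ^ a) * (\<Sum>i = 1..b. real (AS_points p ((p ^ a - 1) div c) (\<alpha> i)))
    - (real p + 1) * real p ^ a * Psi (b - 1) (real p ^ a)"
proof -
  from exists_count_in_extension[of \<alpha>] obtain \<beta> :: 'f
    where "zero_trace_roots p (a * b) (b * c) \<beta> = (\<Sum>i = 1..b. zero_trace_roots p a c (\<alpha> i))" ..
  then show ?thesis by (blast dest: AS_points_relation)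
qed

end

theorem corollary6p2:
  fixes p a b c :: nat
  assumes "prime p"
    and "0 < a" and "0 < b" and "0 < c" and "b > 1"
    and "c dvd p ^ a - 1" and "primitive_divisor p a c" and "(p - 1) dvd c"
    and "primitive_divisor p (a * b) (b * c)"
    and "card (UNIV :: 'F set) = p ^ (a * b)"
    and "card (UNIV :: 'K set) = p ^ a"
  shows "(\<forall>\<beta> :: 'F::{field,finite}. \<exists>\<alpha> :: nat \<Rightarrow> 'K.
            real (AS_points p ((p ^ (a * b) - 1) div (b * c)) \<beta>) =
              1 / real b * Psi b (real p ^ a) *
                (\<Sum>i = 1..b. real (AS_points p ((p ^ a - 1) div c) (\<alpha> i)))
              - (real p + 1) * real p ^ a * Psi (b - 1) (real p ^ a))
       \<and> (\<forall>\<alpha> :: nat \<Rightarrow> 'K::{field,finite}. \<exists>\<beta> :: 'F.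
            real (AS_points p ((p ^ (a * b) - 1) div (b * c)) \<beta>) =
              1 / real b * Psi b (real p ^ a) *
                (\<Sum>i = 1..b. real (AS_points p ((p ^ a - 1) div c) (\<alpha> i)))
              - (real p + 1) * real p ^ a * Psi (b - 1) (real p ^ a))"
proof -
  have "a dvd a * b" by simp
  obtain \<phi> :: "'K \<Rightarrow> 'F" where \<phi>: "\<And>x y. \<phi> (x + y) = \<phi> x + \<phi> y" "\<And>x y. \<phi> (x * y) = \<phi> x * \<phi> y"
    "inj \<phi>" "range \<phi> = {y. y ^ p ^ a = y}"
    by (rule exists_field_embedding[OF assms(1) assms(11) assms(10) \<open>a dvd a * b\<close>]) blast
  interpret trace_descent p a b "TYPE('K)" "TYPE('F)" c \<phi>
    by unfold_locales (fact assms \<phi>)+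
  show ?thesis
    by (intro conjI allI) (rule AS_points_descent, rule AS_points_ascent)
qed

end
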